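(* Let $G$ be a finite group, let $\alpha\in\operatorname{Aut}G$, let $x,y\in G$, and let $m$ be a positive integer. Let $A=G\rtimes\langle\alpha\rangle$ be the semidirect product, with multiplication $(g,\alpha^i)(h,\alpha^j)=(g\,\alpha^i(h),\alpha^{i+j})$. Then there exists $z\in G$ with $$y\,\alpha(y)\cdots\alpha^{m-1}(y)=z^{-1}\,x\,\alpha(x)\cdots\alpha^{m-1}(x)\,\alpha^m(z)$$ if and only if the $m$-th powers of the elements $(x,\alpha)$ and $(y,\alpha)$ of $A$ are conjugate in $A$.
   Context: Here $\langle\alpha\rangle$ is the (finite cyclic) subgroup of $\operatorname{Aut}G$ generated by $\alpha$. The displayed condition says that the cocycles $\hat{\mathbb{Z}}\to G$ determined by $x\alpha(x)\cdots\alpha^{m-1}(x)$ and $y\alpha(y)\cdots\alpha^{m-1}(y)$ are cohomologous when $1\in\hat{\mathbb{Z}}$ acts on $G$ by $\alpha^m$. *)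

theory Defs
  imports "HOL-Algebra.Group"
begin

definition aut_pow :: "('a, 'b) monoid_scheme \<Rightarrow> ('a \<Rightarrow> 'a) \<Rightarrow> nat \<Rightarrow> ('a \<Rightarrow> 'a)" where
  "aut_pow G \<alpha> i = restrict (\<alpha> ^^ i) (carrier G)"

text \<open>The cyclic group \<langle>alpha\<rangle> is represented by the set of all powers alpha^i
  (restricted to the carrier), which is finite since G is finite.\<close>
definition semidirect_cyclic :: "('a, 'b) monoid_scheme \<Rightarrow> ('a \<Rightarrow> 'a) \<Rightarrow> ('a \<times> ('a \<Rightarrow> 'a)) monoid" where
  "semidirect_cyclic G \<alpha> =
     \<lparr> carrier = carrier G \<times> range (aut_pow G \<alpha>),
       mult = (\<lambda>(g, a) (h, b). (g \<otimes>\<^bsub>G\<^esub> a h, restrict (a \<circ> b) (carrier G))),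
       one = (\<one>\<^bsub>G\<^esub>, aut_pow G \<alpha> 0) \<rparr>"

fun twisted_prod :: "('a, 'b) monoid_scheme \<Rightarrow> ('a \<Rightarrow> 'a) \<Rightarrow> 'a \<Rightarrow> nat \<Rightarrow> 'a" where
  "twisted_prod G \<alpha> x 0 = \<one>\<^bsub>G\<^esub>"
| "twisted_prod G \<alpha> x (Suc n) = twisted_prod G \<alpha> x n \<otimes>\<^bsub>G\<^esub> (\<alpha> ^^ n) x"

definition conjugate_in :: "('c, 'd) monoid_scheme \<Rightarrow> 'c \<Rightarrow> 'c \<Rightarrow> bool" where
  "conjugate_in A u v \<longleftrightarrow> (\<exists>c\<in>carrier A. v = c \<otimes>\<^bsub>A\<^esub> u \<otimes>\<^bsub>A\<^esub> inv\<^bsub>A\<^esub> c)"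

end

theory Submission
  imports Defs "HOL-Combinatorics.Cycles"
begin

text \<open>In \<open>G \<rtimes> \<langle>\<alpha>\<rangle>\<close> the \<open>m\<close>-th power of \<open>(x, \<alpha>)\<close> is \<open>(P, \<alpha>\<^sup>m)\<close> with
  \<open>P = x \<alpha>(x) \<cdots> \<alpha>\<^sup>m\<^sup>-\<^sup>1(x)\<close>, and \<open>(w, \<alpha>\<^sup>k)\<close> conjugates \<open>(P, \<alpha>\<^sup>m)\<close> into \<open>(Q, \<alpha>\<^sup>m)\<close>
  exactly when \<open>Q \<alpha>\<^sup>m(w) = w \<alpha>\<^sup>k(P)\<close>, i.e. when \<open>Q\<close> is \<open>\<alpha>\<^sup>m\<close>-twisted conjugate to
  \<open>\<alpha>\<^sup>k(P)\<close>. The extra \<open>\<alpha>\<^sup>k\<close> is harmless: \<open>x \<alpha>(P) = P \<alpha>\<^sup>m(x)\<close>, both sides being the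
  twisted product of \<open>m + 1\<close> factors, so \<open>\<alpha>(P)\<close> is twisted conjugate to \<open>P\<close>; and twisted
  conjugacy is transitive and stable under \<open>\<alpha>\<close>. Finiteness of \<open>G\<close> only serves to make
  \<open>\<alpha>\<close> of finite order, so that the semidirect product is a group.\<close>

lemma bij_betw_funpow_period:
  assumes "finite S" and "bij_betw f S S"
  obtains n where "n > 0" and "\<And>x. x \<in> S \<Longrightarrow> (f ^^ n) x = x"
proof -
  define p where "p x = (if x \<in> S then f x else x)" for x
  have "bij_betw p S S"
    using assms(2) by (rule bij_betw_cong[THEN iffD1, rotated]) (simp add: p_def)
  then have "p permutes S"
    by (rule bij_imp_permutes) (simp add: p_def)
  then obtain n where n: "p ^^ n = id" "n > 0"
    using assms(1) permutation_is_nilpotent permutation_permutes by metis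
  have "(f ^^ k) x \<in> S \<and> (f ^^ k) x = (p ^^ k) x" if "x \<in> S" for k x
    using that assms(2) by (induction k) (auto simp: p_def bij_betw_def)
  with n show thesis
    by (intro that[of n]) simp_all
qed

definition twisted_conjugate :: "('a, 'b) monoid_scheme \<Rightarrow> ('a \<Rightarrow> 'a) \<Rightarrow> 'a \<Rightarrow> 'a \<Rightarrow> bool" where
  "twisted_conjugate G \<phi> a b \<longleftrightarrow> (\<exists>z\<in>carrier G. b = inv\<^bsub>G\<^esub> z \<otimes>\<^bsub>G\<^esub> a \<otimes>\<^bsub>G\<^esub> \<phi> z)"

context group
begin

lemma twisted_conjugate_refl:
  assumes "\<phi> \<in> hom G G" and "a \<in> carrier G"
  shows "twisted_conjugate G \<phi> a a"
proof -
  interpret group_hom G G \<phi> by unfold_locales (fact assms(1))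
  show ?thesis
    unfolding twisted_conjugate_def using assms(2) by (intro bexI[of _ \<one>]) auto
qed

lemma twisted_conjugate_trans:
  assumes "\<phi> \<in> hom G G" and "a \<in> carrier G"
    and "twisted_conjugate G \<phi> a b" and "twisted_conjugate G \<phi> b c"
  shows "twisted_conjugate G \<phi> a c"
proof -
  interpret group_hom G G \<phi> by unfold_locales (fact assms(1))
  obtain z w where z: "z \<in> carrier G" "b = inv z \<otimes> a \<otimes> \<phi> z"
    and w: "w \<in> carrier G" "c = inv w \<otimes> b \<otimes> \<phi> w"
    using assms(3,4) by (auto simp: twisted_conjugate_def)
  have "c = inv (z \<otimes> w) \<otimes> a \<otimes> \<phi> (z \<otimes> w)"
    using z w assms(2) by (simp add: inv_mult_group m_assoc)
  then show ?thesis
    unfolding twisted_conjugate_def using z(1) w(1) by (blast intro: m_closed)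
qed

lemma twisted_conjugate_image:
  assumes "\<phi> \<in> hom G G" and "\<psi> \<in> hom G G" and "\<And>z. z \<in> carrier G \<Longrightarrow> \<psi> (\<phi> z) = \<phi> (\<psi> z)"
    and "a \<in> carrier G" and "twisted_conjugate G \<phi> a b"
  shows "twisted_conjugate G \<phi> (\<psi> a) (\<psi> b)"
proof -
  interpret \<phi>: group_hom G G \<phi> by unfold_locales (fact assms(1))
  interpret \<psi>: group_hom G G \<psi> by unfold_locales (fact assms(2))
  obtain z where z: "z \<in> carrier G" "b = inv z \<otimes> a \<otimes> \<phi> z"
    using assms(5) by (auto simp: twisted_conjugate_def)
  then have "\<psi> b = inv (\<psi> z) \<otimes> \<psi> a \<otimes> \<phi> (\<psi> z)"
    using assms(3,4) by simp
  then show ?thesis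
    using z by (auto simp: twisted_conjugate_def)
qed

lemma twisted_conjugate_iff_intertwining:
  assumes "\<phi> \<in> hom G G" and "a \<in> carrier G" and "b \<in> carrier G"
  shows "twisted_conjugate G \<phi> a b \<longleftrightarrow> (\<exists>w\<in>carrier G. b \<otimes> \<phi> w = w \<otimes> a)"
proof -
  interpret group_hom G G \<phi> by unfold_locales (fact assms(1))
  have key: "b \<otimes> \<phi> (inv z) = inv z \<otimes> a \<longleftrightarrow> b = inv z \<otimes> a \<otimes> \<phi> z" if "z \<in> carrier G" for z
    using inv_solve_right'[of "inv z \<otimes> a" b "\<phi> z"] that assms(2,3) by simp
  show ?thesis
    unfolding twisted_conjugate_def
  proof
    assume "\<exists>z\<in>carrier G. b = inv z \<otimes> a \<otimes> \<phi> z"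
    with key show "\<exists>w\<in>carrier G. b \<otimes> \<phi> w = w \<otimes> a"
      by (blast intro: inv_closed)
  next
    assume "\<exists>w\<in>carrier G. b \<otimes> \<phi> w = w \<otimes> a"
    then obtain w where "w \<in> carrier G" "b \<otimes> \<phi> (inv (inv w)) = inv (inv w) \<otimes> a"
      by auto
    with key show "\<exists>z\<in>carrier G. b = inv z \<otimes> a \<otimes> \<phi> z"
      by (blast intro: inv_closed)
  qed
qed

end

locale group_automorphism = group G for G (structure) +
  fixes \<alpha> :: "'a \<Rightarrow> 'a"
  assumes automorphism: "\<alpha> \<in> iso G G"
begin

sublocale group_hom G G \<alpha>
  using automorphism by unfold_locales (simp add: iso_imp_homomorphism)

lemma funpow_iso: "\<alpha> ^^ n \<in> iso G G"
proof (induction n)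
  case 0
  show ?case
    by (simp add: iso_set_refl)
next
  case (Suc n)
  show ?case
    using iso_set_trans[OF Suc automorphism] by (simp add: comp_def)
qed

lemma funpow_hom: "\<alpha> ^^ n \<in> hom G G"
  using funpow_iso by (rule iso_imp_homomorphism)

lemma funpow_closed [simp]: "x \<in> carrier G \<Longrightarrow> (\<alpha> ^^ n) x \<in> carrier G"
  using funpow_hom by (rule hom_in_carrier)

lemma funpow_hom_mult [simp]:
  "x \<in> carrier G \<Longrightarrow> y \<in> carrier G \<Longrightarrow> (\<alpha> ^^ n) (x \<otimes> y) = (\<alpha> ^^ n) x \<otimes> (\<alpha> ^^ n) y"
  by (rule Group.hom_mult[OF funpow_hom])

lemma twisted_prod_closed [simp]: "x \<in> carrier G \<Longrightarrow> twisted_prod G \<alpha> x n \<in> carrier G"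
  by (induction n) simp_all

lemma twisted_prod_Suc_left:
  assumes "x \<in> carrier G"
  shows "twisted_prod G \<alpha> x (Suc n) = x \<otimes> \<alpha> (twisted_prod G \<alpha> x n)"
proof (induction n)
  case 0
  show ?case
    using assms by simp
next
  case (Suc n)
  have "twisted_prod G \<alpha> x (Suc (Suc n)) = (x \<otimes> \<alpha> (twisted_prod G \<alpha> x n)) \<otimes> \<alpha> ((\<alpha> ^^ n) x)"
    using Suc by simp
  also have "\<dots> = x \<otimes> \<alpha> (twisted_prod G \<alpha> x (Suc n))"
    using assms by (simp add: m_assoc)
  finally show ?case .
qed

lemma twisted_conjugate_twisted_prod_funpow:
  assumes "x \<in> carrier G"
  shows "twisted_conjugate G (\<alpha> ^^ m) (twisted_prod G \<alpha> x m) ((\<alpha> ^^ k) (twisted_prod G \<alpha> x m))"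
proof (induction k)
  case 0
  show ?case
    using twisted_conjugate_refl[OF funpow_hom] assms by simp
next
  case (Suc k)
  let ?P = "twisted_prod G \<alpha> x m"
  have "?P \<otimes> (\<alpha> ^^ m) x = x \<otimes> \<alpha> ?P"
    using twisted_prod_Suc_left[OF assms, of m] by simp
  then have "\<alpha> ?P = inv x \<otimes> ?P \<otimes> (\<alpha> ^^ m) x"
    using assms by (simp add: inv_solve_left m_assoc)
  then have "twisted_conjugate G (\<alpha> ^^ m) ?P (\<alpha> ?P)"
    using assms by (auto simp: twisted_conjugate_def)
  moreover have "twisted_conjugate G (\<alpha> ^^ m) (\<alpha> ?P) (\<alpha> ((\<alpha> ^^ k) ?P))"
    using twisted_conjugate_image[OF funpow_hom funpow_hom[of 1] _ _ Suc] assms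
    by (simp add: funpow_swap1)
  ultimately show ?case
    using twisted_conjugate_trans[OF funpow_hom] assms by simp
qed

lemma twisted_conjugate_twisted_prod_iff:
  assumes "x \<in> carrier G" and "b \<in> carrier G"
  shows "twisted_conjugate G (\<alpha> ^^ m) (twisted_prod G \<alpha> x m) b \<longleftrightarrow>
    (\<exists>w\<in>carrier G. \<exists>k. b \<otimes> (\<alpha> ^^ m) w = w \<otimes> (\<alpha> ^^ k) (twisted_prod G \<alpha> x m))"
    (is "?tc \<longleftrightarrow> (\<exists>w\<in>carrier G. \<exists>k. ?intertwines w k)")
proof
  assume ?tc
  then obtain w where "w \<in> carrier G" "b \<otimes> (\<alpha> ^^ m) w = w \<otimes> twisted_prod G \<alpha> x m"
    using twisted_conjugate_iff_intertwining[OF funpow_hom _ assms(2)] assms(1) by auto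
  then show "\<exists>w\<in>carrier G. \<exists>k. ?intertwines w k"
    by (intro bexI exI[of _ 0]) simp_all
next
  assume "\<exists>w\<in>carrier G. \<exists>k. ?intertwines w k"
  then obtain w k where "w \<in> carrier G" "?intertwines w k"
    by blast
  then have "twisted_conjugate G (\<alpha> ^^ m) ((\<alpha> ^^ k) (twisted_prod G \<alpha> x m)) b"
    using twisted_conjugate_iff_intertwining[OF funpow_hom _ assms(2)] assms(1) by auto
  then show ?tc
    by (rule twisted_conjugate_trans[OF funpow_hom twisted_prod_closed[OF assms(1)]
          twisted_conjugate_twisted_prod_funpow[OF assms(1)]])
qed

lemma aut_pow_periodic:
  assumes "finite (carrier G)"
  obtains n where "n > 0" and "\<And>i. aut_pow G \<alpha> (i * n) = aut_pow G \<alpha> 0"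
proof -
  have "bij_betw \<alpha> (carrier G) (carrier G)"
    using automorphism by (simp add: iso_def)
  then obtain n where n: "n > 0" "\<And>x. x \<in> carrier G \<Longrightarrow> (\<alpha> ^^ n) x = x"
    using assms bij_betw_funpow_period by blast
  have "((\<alpha> ^^ n) ^^ i) x = x" if "x \<in> carrier G" for i x
    using that n(2) by (induction i) simp_all
  then have "aut_pow G \<alpha> (i * n) = aut_pow G \<alpha> 0" for i
    by (auto simp: aut_pow_def funpow_mult mult.commute)
  with n(1) show thesis
    by (rule that)
qed

lemma semidirect_cyclic_carrier: "carrier (semidirect_cyclic G \<alpha>) = carrier G \<times> range (aut_pow G \<alpha>)"
  by (simp add: semidirect_cyclic_def)

lemma semidirect_cyclic_one: "\<one>\<^bsub>semidirect_cyclic G \<alpha>\<^esub> = (\<one>, aut_pow G \<alpha> 0)"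
  by (simp add: semidirect_cyclic_def)

lemma semidirect_cyclic_mult:
  assumes "h \<in> carrier G"
  shows "(g, aut_pow G \<alpha> i) \<otimes>\<^bsub>semidirect_cyclic G \<alpha>\<^esub> (h, aut_pow G \<alpha> j) =
    (g \<otimes> (\<alpha> ^^ i) h, aut_pow G \<alpha> (i + j))"
proof -
  have "restrict (aut_pow G \<alpha> i \<circ> aut_pow G \<alpha> j) (carrier G) = aut_pow G \<alpha> (i + j)"
    by (auto simp: aut_pow_def funpow_add)
  then show ?thesis
    using assms by (simp add: semidirect_cyclic_def aut_pow_def)
qed

lemma semidirect_cyclic_group:
  assumes "finite (carrier G)"
  shows "group (semidirect_cyclic G \<alpha>)" (is "group ?A")
proof -
  obtain n where n: "n > 0" "\<And>i. aut_pow G \<alpha> (i * n) = aut_pow G \<alpha> 0"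
    using assms aut_pow_periodic by blast
  show ?thesis
  proof (rule groupI)
    fix u v w
    assume "u \<in> carrier ?A" "v \<in> carrier ?A" "w \<in> carrier ?A"
    then show "u \<otimes>\<^bsub>?A\<^esub> v \<otimes>\<^bsub>?A\<^esub> w = u \<otimes>\<^bsub>?A\<^esub> (v \<otimes>\<^bsub>?A\<^esub> w)"
      by (auto simp: semidirect_cyclic_carrier semidirect_cyclic_mult m_assoc funpow_add add.assoc)
  next
    fix u
    assume u: "u \<in> carrier ?A"
    then obtain g i where g: "g \<in> carrier G" and "u = (g, aut_pow G \<alpha> i)"
      by (auto simp: semidirect_cyclic_carrier)
    moreover define j where "j = i * (n - 1)"
    moreover have "i + j = i * n"
      using n(1) by (cases n) (simp_all add: j_def)
    ultimately have "(inv ((\<alpha> ^^ j) g), aut_pow G \<alpha> j) \<otimes>\<^bsub>?A\<^esub> u = \<one>\<^bsub>?A\<^esub>"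
      by (simp add: semidirect_cyclic_mult semidirect_cyclic_one n(2) add.commute mult.commute)
    moreover have "(inv ((\<alpha> ^^ j) g), aut_pow G \<alpha> j) \<in> carrier ?A"
      using g by (simp add: semidirect_cyclic_carrier)
    ultimately show "\<exists>v\<in>carrier ?A. v \<otimes>\<^bsub>?A\<^esub> u = \<one>\<^bsub>?A\<^esub>"
      by blast
  qed (auto simp: semidirect_cyclic_carrier semidirect_cyclic_one semidirect_cyclic_mult)
qed

lemma semidirect_cyclic_pow:
  assumes "x \<in> carrier G"
  shows "(x, aut_pow G \<alpha> 1) [^]\<^bsub>semidirect_cyclic G \<alpha>\<^esub> n = (twisted_prod G \<alpha> x n, aut_pow G \<alpha> n)"
  using assms by (induction n) (simp_all add: semidirect_cyclic_one semidirect_cyclic_mult)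

lemma conjugate_in_semidirect_cyclic_iff:
  assumes "finite (carrier G)" and "a \<in> carrier G" and "b \<in> carrier G"
  shows "conjugate_in (semidirect_cyclic G \<alpha>) (a, aut_pow G \<alpha> m) (b, aut_pow G \<alpha> m) \<longleftrightarrow>
    (\<exists>w\<in>carrier G. \<exists>k. b \<otimes> (\<alpha> ^^ m) w = w \<otimes> (\<alpha> ^^ k) a)"
proof -
  let ?A = "semidirect_cyclic G \<alpha>"
  interpret A: group ?A
    using assms(1) by (rule semidirect_cyclic_group)
  have "c \<otimes>\<^bsub>?A\<^esub> (a, aut_pow G \<alpha> m) \<otimes>\<^bsub>?A\<^esub> inv\<^bsub>?A\<^esub> c = (b, aut_pow G \<alpha> m) \<longleftrightarrow>
      c \<otimes>\<^bsub>?A\<^esub> (a, aut_pow G \<alpha> m) = (b, aut_pow G \<alpha> m) \<otimes>\<^bsub>?A\<^esub> c"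
    if "c \<in> carrier ?A" for c
    using that assms(2,3) by (intro A.inv_solve_right') (auto simp: semidirect_cyclic_carrier semidirect_cyclic_mult)
  then have "conjugate_in ?A (a, aut_pow G \<alpha> m) (b, aut_pow G \<alpha> m) \<longleftrightarrow>
    (\<exists>c\<in>carrier ?A. c \<otimes>\<^bsub>?A\<^esub> (a, aut_pow G \<alpha> m) = (b, aut_pow G \<alpha> m) \<otimes>\<^bsub>?A\<^esub> c)"
    unfolding conjugate_in_def by (metis (no_types, lifting))
  also have "\<dots> \<longleftrightarrow> (\<exists>w\<in>carrier G. \<exists>k. b \<otimes> (\<alpha> ^^ m) w = w \<otimes> (\<alpha> ^^ k) a)"
    using assms(2) by (auto simp: semidirect_cyclic_carrier semidirect_cyclic_mult add.commute eq_commute)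
  finally show ?thesis .
qed

end

theorem lemma6p2:
  fixes G :: "('a, 'b) monoid_scheme" and \<alpha> :: "'a \<Rightarrow> 'a" and x y :: 'a and m :: nat
  assumes "group G" and "finite (carrier G)"
    and "\<alpha> \<in> iso G G"
    and "x \<in> carrier G" and "y \<in> carrier G"
    and "m > 0"
  shows "(\<exists>z\<in>carrier G. twisted_prod G \<alpha> y m =
            inv\<^bsub>G\<^esub> z \<otimes>\<^bsub>G\<^esub> twisted_prod G \<alpha> x m \<otimes>\<^bsub>G\<^esub> (\<alpha> ^^ m) z)
         \<longleftrightarrow> conjugate_in (semidirect_cyclic G \<alpha>)
               ((x, aut_pow G \<alpha> 1) [^]\<^bsub>semidirect_cyclic G \<alpha>\<^esub> m)
               ((y, aut_pow G \<alpha> 1) [^]\<^bsub>semidirect_cyclic G \<alpha>\<^esub> m)"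
proof -
  interpret group_automorphism G \<alpha>
    using assms(1,3) by (simp add: group_automorphism_def group_automorphism_axioms_def)
  have "conjugate_in (semidirect_cyclic G \<alpha>)
      ((x, aut_pow G \<alpha> 1) [^]\<^bsub>semidirect_cyclic G \<alpha>\<^esub> m)
      ((y, aut_pow G \<alpha> 1) [^]\<^bsub>semidirect_cyclic G \<alpha>\<^esub> m) \<longleftrightarrow>
    (\<exists>w\<in>carrier G. \<exists>k. twisted_prod G \<alpha> y m \<otimes>\<^bsub>G\<^esub> (\<alpha> ^^ m) w =
      w \<otimes>\<^bsub>G\<^esub> (\<alpha> ^^ k) (twisted_prod G \<alpha> x m))"
    unfolding semidirect_cyclic_pow[OF assms(4)] semidirect_cyclic_pow[OF assms(5)]
    using assms(2,4,5) by (simp add: conjugate_in_semidirect_cyclic_iff)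
  also have "\<dots> \<longleftrightarrow> twisted_conjugate G (\<alpha> ^^ m) (twisted_prod G \<alpha> x m) (twisted_prod G \<alpha> y m)"
    using assms(4,5) by (simp add: twisted_conjugate_twisted_prod_iff)
  finally show ?thesis
    by (simp add: twisted_conjugate_def)
qed

end
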